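(* Let $n$ be a positive integer and $1\le k\le c\le \frac n2$. For every $(k,k)$-legal diagram $\nu$ (a partition with exactly $k$ parts), the Schur polynomial $S_\nu$ is a linear combination, with integer coefficients, of Schur polynomials $S_{\lambda/\mu}$ of $(k,c)$-legal diagrams $\lambda/\mu$.
   Context: Here $h_d$ ($d\ge0$) denotes the complete homogeneous symmetric polynomial of degree $d$ in $n$ variables (so $h_0=1$ and $h_1,\ldots,h_n$ are algebraically independent), and $h_d=0$ for $d<0$. For $1\le c\le n$, $A_c$ is the $(n-c+1)\times c$ matrix whose entry in row $i$, column $j$ is $h_{n-c+1-i+j}$. For a partition $\lambda$ with exactly $k$ parts and a partition $\mu$ with $\mu_i\le\lambda_i$ and $\mu_k=0$, $S_{\lambda/\mu}=\det(h_{\lambda_i-\mu_j-i+j})_{1\le i,j\le k}$ (with $S_\nu=S_{\nu/0}$), and the diagram $\lambda/\mu$ is $(k,c)$-legal if $S_{\lambda/\mu}$ equals some $k\times k$ minor of $A_c$. *)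

theory Defs
  imports "Jordan_Normal_Form.Determinant"
begin

text \<open>Polynomials in the n variables x_0,...,x_{n-1} with integer coefficients are
represented by their polynomial functions on int^n (points are functions nat => int,
only the first n coordinates matter).  Since int is an infinite integral domain,
two integer polynomials are equal iff their polynomial functions agree.\<close>

definition hsym :: "nat \<Rightarrow> int \<Rightarrow> (nat \<Rightarrow> int) \<Rightarrow> int" where
  "hsym n d x = (if d < 0 then 0 else
     (\<Sum>a\<in>{a :: nat \<Rightarrow> nat. (\<forall>i. n \<le> i \<longrightarrow> a i = 0) \<and> (\<Sum>i<n. a i) = nat d}.
        \<Prod>i<n. x i ^ a i))"

definition is_partition_k :: "nat \<Rightarrow> nat list \<Rightarrow> bool" where
  "is_partition_k k lam \<longleftrightarrow> length lam = k \<and> sorted_wrt (\<ge>) lam \<and> (\<forall>p\<in>set lam. 0 < p)"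

definition inner_ok :: "nat \<Rightarrow> nat list \<Rightarrow> nat list \<Rightarrow> bool" where
  "inner_ok k lam mu \<longleftrightarrow> length mu = k \<and> sorted_wrt (\<ge>) mu \<and>
     (\<forall>i<k. mu ! i \<le> lam ! i) \<and> mu ! (k - 1) = 0"

text \<open>Skew Schur polynomial S_{lam/mu} = det(h_{lam_i - mu_j - i + j}), 1 <= i,j <= k
(0-indexed here; the shift does not change j - i).\<close>
definition skew_schur :: "nat \<Rightarrow> nat \<Rightarrow> nat list \<Rightarrow> nat list \<Rightarrow> (nat \<Rightarrow> int) \<Rightarrow> int" where
  "skew_schur n k lam mu x = det (mat k k (\<lambda>(i, j).
      hsym n (int (lam ! i) - int (mu ! j) - int i + int j) x))"

text \<open>The k x k minor of A_c (size (n-c+1) x c, entry (i,j) = h_{n-c+1-i+j}, 1-indexed)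
on rows rs and columns cs (strictly increasing lists of 1-based indices).\<close>
definition minor_A :: "nat \<Rightarrow> nat \<Rightarrow> nat \<Rightarrow> nat list \<Rightarrow> nat list \<Rightarrow> (nat \<Rightarrow> int) \<Rightarrow> int" where
  "minor_A n c k rs cs x = det (mat k k (\<lambda>(a, b).
      hsym n (int n - int c + 1 - int (rs ! a) + int (cs ! b)) x))"

definition legal :: "nat \<Rightarrow> nat \<Rightarrow> nat \<Rightarrow> nat list \<Rightarrow> nat list \<Rightarrow> bool" where
  "legal n k c lam mu \<longleftrightarrow> is_partition_k k lam \<and> inner_ok k lam mu \<and>
     (\<exists>rs cs. length rs = k \<and> sorted_wrt (<) rs \<and> set rs \<subseteq> {1..n - c + 1} \<and>
              length cs = k \<and> sorted_wrt (<) cs \<and> set cs \<subseteq> {1..c} \<and>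
              (\<forall>x. skew_schur n k lam mu x = minor_A n c k rs cs x))"

end

theory Submission
  imports Defs "HOL-Library.Product_Lexorder"
begin

text \<open>Skew Schur polynomials S_(\<lambda>/\<mu>) and the minors of A_c are determinants
  det (h_(\<alpha>_i + \<beta>_j)) with \<alpha> strictly decreasing and \<beta> strictly increasing; such a
  determinant is a minor of A_c once \<alpha> spans at most n - c and \<beta> at most c - 1.
  Reindexing the Leibniz expansion by the permutation gives, over r-subsets I and J,
  \<Sum>_I det (h_(\<alpha>_i + [i \<in> I] + \<beta>_j)) = \<Sum>_J det (h_(\<alpha>_i + \<beta>_j + [j \<in> J])).
  Lowering the initial run \<alpha>_0 = \<alpha>_1 + 1 = ... = \<alpha>_i + i of \<alpha> by one and applying this
  identity rewrites a minor of A_k through determinants in which \<alpha> spans less, or as much with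
  a shorter initial run. Each \<beta> spans at most one more, which \<alpha>_0 + \<beta>_(k-1) \<le> n allows
  while \<alpha> spans more than n - c \<ge> k; terms with equal rows or columns vanish.\<close>

lemma bij_betw_image_card_subsets:
  assumes "p permutes A"
  shows "bij_betw ((`) p) {I. I \<subseteq> A \<and> card I = r} {I. I \<subseteq> A \<and> card I = r}"
    (is "bij_betw _ ?S ?S")
proof (rule bij_betw_byWitness[where f' = "(`) (inv_into UNIV p)"])
  have "inj p" "inj (inv_into UNIV p)" "inv_into UNIV p permutes A"
    using assms permutes_inj permutes_inv by blast+
  then show "(`) p ` ?S \<subseteq> ?S" "(`) (inv_into UNIV p) ` ?S \<subseteq> ?S"
    using assms by (auto simp: card_image inj_on_subset dest: permutes_in_image[THEN iffD2])
  show "\<forall>I\<in>?S. inv_into UNIV p ` p ` I = I" using \<open>inj p\<close> by (simp add: image_comp)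
  show "\<forall>I\<in>?S. p ` inv_into UNIV p ` I = I" using assms by (simp add: image_comp)
qed

definition hankel_det ::
    "nat \<Rightarrow> (int \<Rightarrow> 'a :: comm_ring_1) \<Rightarrow> (nat \<Rightarrow> int) \<Rightarrow> (nat \<Rightarrow> int) \<Rightarrow> 'a" where
  "hankel_det k f al be = det (mat k k (\<lambda>(i, j). f (al i + be j)))"

definition raise_at :: "(nat \<Rightarrow> int) \<Rightarrow> nat set \<Rightarrow> nat \<Rightarrow> int" where
  "raise_at al I i = al i + of_bool (i \<in> I)"

lemma hankel_det_cong:
  assumes "\<And>i j. i < k \<Longrightarrow> j < k \<Longrightarrow> al i + be j = al' i + be' j"
  shows "hankel_det k f al be = hankel_det k f al' be'"
  unfolding hankel_det_def using assms by (intro arg_cong[where f = det] eq_matI) auto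

lemma skew_schur_eq_hankel_det:
  "skew_schur n k lam mu x =
     hankel_det k (\<lambda>d. hsym n d x) (\<lambda>i. int (lam ! i) - int i) (\<lambda>j. int j - int (mu ! j))"
  unfolding skew_schur_def hankel_det_def
  by (intro arg_cong[where f = det] eq_matI) (auto simp: algebra_simps)

lemma minor_A_eq_hankel_det:
  "minor_A n c k rs cs x =
     hankel_det k (\<lambda>d. hsym n d x) (\<lambda>a. int n - int c + 1 - int (rs ! a)) (\<lambda>b. int (cs ! b))"
  unfolding minor_A_def hankel_det_def by (intro arg_cong[where f = det] eq_matI) auto

lemma hankel_det_Leibniz:
  "hankel_det k f al be =
     (\<Sum>p | p permutes {0..<k}. signof p * (\<Prod>i = 0..<k. f (al i + be (p i))))"
proof -
  have "p i < k" if "p permutes {0..<k}" "i < k" for p i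
    using that permutes_in_image by fastforce
  then show ?thesis
    unfolding hankel_det_def by (subst det_def'[of _ k]) (auto intro!: sum.cong prod.cong)
qed

lemma hankel_det_eq_0_if_rows_eq:
  assumes "Suc m < k" "al m = al (Suc m)"
  shows "hankel_det k f al be = 0"
  unfolding hankel_det_def using assms by (intro det_identical_rows[of _ k m "Suc m"] eq_vecI) auto

lemma hankel_det_eq_0_if_cols_eq:
  assumes "Suc m < k" "be m = be (Suc m)"
  shows "hankel_det k f al be = 0"
  unfolding hankel_det_def using assms by (intro det_identical_columns[of _ k m "Suc m"] eq_vecI) auto

lemma sum_hankel_det_raise_rows_eq_raise_cols:
  "(\<Sum>I | I \<subseteq> {0..<k} \<and> card I = r. hankel_det k f (raise_at al I) be) =
   (\<Sum>J | J \<subseteq> {0..<k} \<and> card J = r. hankel_det k f al (raise_at be J))"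
proof -
  let ?S = "{I. I \<subseteq> {0..<k} \<and> card I = r}"
  have reindex: "(\<Sum>I\<in>?S. \<Prod>i = 0..<k. f (al i + of_bool (i \<in> I) + be (p i))) =
        (\<Sum>J\<in>?S. \<Prod>i = 0..<k. f (al i + (be (p i) + of_bool (p i \<in> J))))"
    if p: "p permutes {0..<k}" for p
  proof -
    have "inj p" using p permutes_inj by blast
    have "(\<Sum>J\<in>?S. \<Prod>i = 0..<k. f (al i + (be (p i) + of_bool (p i \<in> J)))) =
          (\<Sum>I\<in>?S. \<Prod>i = 0..<k. f (al i + (be (p i) + of_bool (p i \<in> p ` I))))"
      by (rule sum.reindex_bij_betw[OF bij_betw_image_card_subsets[OF p], symmetric])
    also have "\<dots> = (\<Sum>I\<in>?S. \<Prod>i = 0..<k. f (al i + of_bool (i \<in> I) + be (p i)))"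
      using \<open>inj p\<close> by (simp add: inj_image_mem_iff ac_simps)
    finally show ?thesis by simp
  qed
  have "(\<Sum>I\<in>?S. hankel_det k f (raise_at al I) be) =
        (\<Sum>p | p permutes {0..<k}.
           signof p * (\<Sum>I\<in>?S. \<Prod>i = 0..<k. f (al i + of_bool (i \<in> I) + be (p i))))"
    unfolding hankel_det_Leibniz raise_at_def sum_distrib_left by (rule sum.swap)
  also have "\<dots> = (\<Sum>p | p permutes {0..<k}.
           signof p * (\<Sum>J\<in>?S. \<Prod>i = 0..<k. f (al i + (be (p i) + of_bool (p i \<in> J)))))"
    using reindex by (auto intro!: sum.cong)
  also have "\<dots> = (\<Sum>J\<in>?S. hankel_det k f al (raise_at be J))"
    unfolding hankel_det_Leibniz raise_at_def sum_distrib_left by (rule sum.swap)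
  finally show ?thesis .
qed

lemma hankel_det_raise_rows_eq_diff:
  assumes "I0 \<subseteq> {0..<k}" "card I0 = r"
  shows "hankel_det k f (raise_at al I0) be =
    (\<Sum>J | J \<subseteq> {0..<k} \<and> card J = r. hankel_det k f al (raise_at be J)) -
    (\<Sum>I \<in> {I. I \<subseteq> {0..<k} \<and> card I = r} - {I0}. hankel_det k f (raise_at al I) be)"
proof -
  have "finite {I. I \<subseteq> {0..<k} \<and> card I = r}"
    by (rule finite_subset[of _ "Pow {0..<k}"]) auto
  then show ?thesis
    using sum.remove[of _ I0 "\<lambda>I. hankel_det k f (raise_at al I) be"] assms
    by (simp add: sum_hankel_det_raise_rows_eq_raise_cols[symmetric])
qed

inductive_set hankel_span ::
    "nat \<Rightarrow> ((nat \<Rightarrow> int) \<times> (nat \<Rightarrow> int)) set \<Rightarrow> ((int \<Rightarrow> int) \<Rightarrow> int) set"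
  for k S where
  zero: "(\<lambda>f. 0) \<in> hankel_span k S"
| basis: "(al, be) \<in> S \<Longrightarrow> (\<lambda>f. hankel_det k f al be) \<in> hankel_span k S"
| diff: "g \<in> hankel_span k S \<Longrightarrow> h \<in> hankel_span k S \<Longrightarrow> (\<lambda>f. g f - h f) \<in> hankel_span k S"

lemma hankel_span_add:
  assumes "g \<in> hankel_span k S" "h \<in> hankel_span k S"
  shows "(\<lambda>f. g f + h f) \<in> hankel_span k S"
  using hankel_span.diff[OF assms(1) hankel_span.diff[OF hankel_span.zero assms(2)]] by simp

lemma hankel_span_sum:
  assumes "finite A" "\<And>x. x \<in> A \<Longrightarrow> g x \<in> hankel_span k S"
  shows "(\<lambda>f. \<Sum>x\<in>A. g x f) \<in> hankel_span k S"
  using assms by (induction A rule: finite_induct) (auto intro: hankel_span.zero hankel_span_add)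

lemma hankel_span_skew_schur_combination:
  assumes "g \<in> hankel_span k S"
    and "\<And>al be. (al, be) \<in> S \<Longrightarrow> \<exists>lam mu. P lam mu \<and>
           (\<forall>x. skew_schur n k lam mu x = hankel_det k (\<lambda>d. hsym n d x) al be)"
  shows "\<exists>L :: (int \<times> nat list \<times> nat list) list. (\<forall>(a, lam, mu)\<in>set L. P lam mu) \<and>
           (\<forall>x. g (\<lambda>d. hsym n d x) = (\<Sum>(a, lam, mu)\<leftarrow>L. a * skew_schur n k lam mu x))"
  using assms(1)
proof induction
  case zero
  show ?case by (rule exI[of _ "[]"]) simp
next
  case (basis al be)
  then obtain lam mu where "P lam mu"
    and "\<forall>x. skew_schur n k lam mu x = hankel_det k (\<lambda>d. hsym n d x) al be"
    using assms(2) by blast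
  then show ?case by (intro exI[of _ "[(1, lam, mu)]"]) simp
next
  case (diff g h)
  then obtain L1 L2 where L1: "\<forall>(a, lam, mu)\<in>set L1. P lam mu"
      "\<forall>x. g (\<lambda>d. hsym n d x) = (\<Sum>(a, lam, mu)\<leftarrow>L1. a * skew_schur n k lam mu x)"
    and L2: "\<forall>(a, lam, mu)\<in>set L2. P lam mu"
      "\<forall>x. h (\<lambda>d. hsym n d x) = (\<Sum>(a, lam, mu)\<leftarrow>L2. a * skew_schur n k lam mu x)"
    by blast
  have "- (\<Sum>(a, lam, mu)\<leftarrow>L2. a * skew_schur n k lam mu x) =
        (\<Sum>(a, lam, mu)\<leftarrow>map (\<lambda>(a, lam, mu). (- a, lam, mu)) L2. a * skew_schur n k lam mu x)" for x
    by (induction L2) auto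
  with L1 L2 show ?case
    by (intro exI[of _ "L1 @ map (\<lambda>(a, lam, mu). (- a, lam, mu)) L2"]) auto
qed

definition strict_decr :: "nat \<Rightarrow> (nat \<Rightarrow> int) \<Rightarrow> bool" where
  "strict_decr k al \<longleftrightarrow> (\<forall>m. Suc m < k \<longrightarrow> al (Suc m) < al m)"

definition strict_incr :: "nat \<Rightarrow> (nat \<Rightarrow> int) \<Rightarrow> bool" where
  "strict_incr k be \<longleftrightarrow> (\<forall>m. Suc m < k \<longrightarrow> be m < be (Suc m))"

lemma strict_decr_gap:
  assumes "strict_decr k al" "i \<le> j" "j < k"
  shows "al j + int j \<le> al i + int i"
proof -
  have "(\<lambda>m. al m + int m) j \<le> (\<lambda>m. al m + int m) i"
  proof (rule lift_Suc_antimono_le_ivl[where N = "{m. Suc m < k}"])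
    show "{i..<j} \<subseteq> {m. Suc m < k}" using assms(3) by auto
  qed (use assms(1,2) in \<open>auto simp: strict_decr_def\<close>)
  then show ?thesis by simp
qed

lemma strict_incr_gap:
  assumes "strict_incr k be" "i \<le> j" "j < k"
  shows "be i + int j \<le> be j + int i"
proof -
  have "(\<lambda>m. be m - int m) i \<le> (\<lambda>m. be m - int m) j"
  proof (rule lift_Suc_mono_le_ivl[where N = "{m. Suc m < k}"])
    show "{i..<j} \<subseteq> {m. Suc m < k}" using assms(3) by auto
  qed (use assms(1,2) in \<open>auto simp: strict_incr_def\<close>)
  then show ?thesis by simp
qed

lemma strict_decr_bounds:
  assumes "strict_decr k al" "a < k"
  shows "al (k - 1) + int (k - 1) \<le> al a + int a" "al a + int a \<le> al 0"
  using strict_decr_gap[OF assms(1), of a "k - 1"] strict_decr_gap[OF assms(1), of 0 a] assms(2)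
  by simp_all

lemma strict_incr_bounds:
  assumes "strict_incr k be" "b < k"
  shows "be 0 + int b \<le> be b" "be b + int (k - 1) \<le> be (k - 1) + int b"
  using strict_incr_gap[OF assms(1), of 0 b] strict_incr_gap[OF assms(1), of b "k - 1"] assms(2)
  by simp_all

lemma sorted_wrt_map_nat_upt:
  assumes "strict_incr k g" "\<And>i. i < k \<Longrightarrow> 0 \<le> g i"
  shows "sorted_wrt (<) (map (\<lambda>i. nat (g i)) [0..<k])"
  unfolding sorted_wrt_iff_nth_less
proof (intro allI impI)
  fix i j assume "i < j" "j < length (map (\<lambda>i. nat (g i)) [0..<k])"
  then show "map (\<lambda>i. nat (g i)) [0..<k] ! i < map (\<lambda>i. nat (g i)) [0..<k] ! j"
    using strict_incr_gap[OF assms(1), of i j] assms(2)[of i] by simp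
qed

lemma raise_at_rows_vanish_or_strict_decr:
  assumes "strict_decr k al"
  shows "(\<forall>f. hankel_det k f (raise_at al I) be = 0) \<or> strict_decr k (raise_at al I)"
proof (rule disjCI)
  assume "\<not> strict_decr k (raise_at al I)"
  then obtain m where "Suc m < k" "raise_at al I m \<le> raise_at al I (Suc m)"
    unfolding strict_decr_def by auto
  moreover have "al (Suc m) < al m" using assms \<open>Suc m < k\<close> unfolding strict_decr_def by blast
  ultimately have "raise_at al I m = raise_at al I (Suc m)"
    by (auto simp: raise_at_def of_bool_def split: if_splits)
  with \<open>Suc m < k\<close> show "\<forall>f. hankel_det k f (raise_at al I) be = 0"
    by (blast intro: hankel_det_eq_0_if_rows_eq)
qed

lemma raise_at_cols_vanish_or_strict_incr:
  assumes "strict_incr k be"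
  shows "(\<forall>f. hankel_det k f al (raise_at be J) = 0) \<or> strict_incr k (raise_at be J)"
proof (rule disjCI)
  assume "\<not> strict_incr k (raise_at be J)"
  then obtain m where "Suc m < k" "raise_at be J (Suc m) \<le> raise_at be J m"
    unfolding strict_incr_def by auto
  moreover have "be m < be (Suc m)" using assms \<open>Suc m < k\<close> unfolding strict_incr_def by blast
  ultimately have "raise_at be J m = raise_at be J (Suc m)"
    by (auto simp: raise_at_def of_bool_def split: if_splits)
  with \<open>Suc m < k\<close> show "\<forall>f. hankel_det k f al (raise_at be J) = 0"
    by (blast intro: hankel_det_eq_0_if_cols_eq)
qed

definition admissible :: "nat \<Rightarrow> nat \<Rightarrow> (nat \<Rightarrow> int) \<Rightarrow> (nat \<Rightarrow> int) \<Rightarrow> bool" where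
  "admissible n k al be \<longleftrightarrow> strict_decr k al \<and> strict_incr k be \<and>
     1 \<le> al (k - 1) + be 0 \<and> al 0 + be (k - 1) \<le> int n"

definition legal_params :: "nat \<Rightarrow> nat \<Rightarrow> nat \<Rightarrow> ((nat \<Rightarrow> int) \<times> (nat \<Rightarrow> int)) set" where
  "legal_params n c k = {(al, be). admissible n k al be \<and>
     al 0 - al (k - 1) \<le> int n - int c \<and> be (k - 1) - be 0 \<le> int c - 1}"

definition first_wide_gap :: "nat \<Rightarrow> (nat \<Rightarrow> int) \<Rightarrow> nat" where
  "first_wide_gap k al = (LEAST i. Suc i < k \<and> al (Suc i) + 1 < al i)"

text \<open>Pairs are ordered lexicographically (Product_Lexorder).\<close>
definition reduction_measure :: "nat \<Rightarrow> (nat \<Rightarrow> int) \<Rightarrow> nat \<times> nat" where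
  "reduction_measure k al = (nat (al 0 - al (k - 1)), first_wide_gap k al)"

lemma first_wide_gap_spec:
  assumes "strict_decr k al" "int (k - 1) < al 0 - al (k - 1)"
  defines "i \<equiv> first_wide_gap k al"
  shows "Suc i < k" "al (Suc i) + 1 < al i" "\<forall>q<i. al q = al (Suc q) + 1"
proof -
  have "\<exists>i. Suc i < k \<and> al (Suc i) + 1 < al i"
  proof (rule ccontr)
    assume no_gap: "\<nexists>i. Suc i < k \<and> al (Suc i) + 1 < al i"
    have "(\<lambda>m. al m + int m) 0 \<le> (\<lambda>m. al m + int m) (k - 1)"
    proof (rule lift_Suc_mono_le_ivl[where N = "{m. Suc m < k}"])
      show "al m + int m \<le> al (Suc m) + int (Suc m)" if "m \<in> {m. Suc m < k}" for m
        using no_gap that by force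
    qed auto
    with assms(2) show False by simp
  qed
  then have "Suc i < k \<and> al (Suc i) + 1 < al i"
    unfolding i_def first_wide_gap_def by (rule LeastI_ex)
  then show "Suc i < k" "al (Suc i) + 1 < al i" by auto
  show "\<forall>q<i. al q = al (Suc q) + 1"
  proof (intro allI impI)
    fix q assume "q < i"
    have "\<not> (Suc q < k \<and> al (Suc q) + 1 < al q)"
      using not_less_Least[of q "\<lambda>i. Suc i < k \<and> al (Suc i) + 1 < al i"] \<open>q < i\<close>
      unfolding i_def first_wide_gap_def by blast
    moreover have "Suc q < k" using \<open>q < i\<close> \<open>Suc i < k\<close> by simp
    ultimately show "al q = al (Suc q) + 1" using assms(1) unfolding strict_decr_def by force
  qed
qed

lemma strict_decr_lower_top:
  assumes "strict_decr k (raise_at al {..i})" "al (Suc i) < al i"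
  shows "strict_decr k al"
  unfolding strict_decr_def
proof (intro allI impI)
  fix m assume "Suc m < k"
  then have "raise_at al {..i} (Suc m) < raise_at al {..i} m"
    using assms(1) unfolding strict_decr_def by blast
  then show "al (Suc m) < al m"
    using assms(2) by (cases "m < i"; cases "m = i") (simp_all add: raise_at_def)
qed

lemma raise_cols_term_vanishes_or_smaller:
  assumes adm: "admissible n k al be" and al_eq: "raise_at low {..i} = al" and "Suc i < k"
    and decr: "strict_decr k low" and spread: "be (k - 1) - be 0 \<le> int c - 2"
  shows "(\<forall>f. hankel_det k f low (raise_at be J) = 0) \<or>
    admissible n k low (raise_at be J) \<and> raise_at be J (k - 1) - raise_at be J 0 \<le> int c - 1 \<and>
    reduction_measure k low < reduction_measure k al"
proof -
  have "strict_incr k be" using adm unfolding admissible_def by blast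
  from raise_at_cols_vanish_or_strict_incr[OF this, of low J] show ?thesis
  proof (rule disj_forward)
    assume incr: "strict_incr k (raise_at be J)"
    have ends: "al 0 = low 0 + 1" "al (k - 1) = low (k - 1)"
      using \<open>Suc i < k\<close> unfolding al_eq[symmetric] by (auto simp: raise_at_def)
    have "be 0 \<le> raise_at be J 0" "raise_at be J (k - 1) \<le> be (k - 1) + 1"
      by (simp_all add: raise_at_def)
    moreover have "0 \<le> low 0 - low (k - 1)"
      using strict_decr_gap[OF decr, of 0 "k - 1"] \<open>Suc i < k\<close> by simp
    ultimately show "admissible n k low (raise_at be J) \<and>
        raise_at be J (k - 1) - raise_at be J 0 \<le> int c - 1 \<and>
        reduction_measure k low < reduction_measure k al"
      using adm decr incr ends spread by (auto simp: admissible_def reduction_measure_def)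
  qed
qed

lemma raise_rows_term_vanishes_or_smaller:
  assumes adm: "admissible n k al be" and al_eq: "raise_at low {..i} = al" and i: "Suc i < k"
    and decr: "strict_decr k low"
    and run: "\<forall>q<i. al q = al (Suc q) + 1" and gap: "first_wide_gap k al = i"
    and I: "I \<subseteq> {0..<k}" "card I = Suc i" "I \<noteq> {..i}"
  shows "(\<forall>f. hankel_det k f (raise_at low I) be = 0) \<or>
    admissible n k (raise_at low I) be \<and> reduction_measure k (raise_at low I) < reduction_measure k al"
  using raise_at_rows_vanish_or_strict_decr[OF decr, of I be]
proof (rule disj_forward)
  let ?new = "raise_at low I"
  assume decr': "strict_decr k ?new"
  have top: "?new 0 \<le> al 0" and bot: "al (k - 1) \<le> ?new (k - 1)"
    using i unfolding al_eq[symmetric] by (auto simp: raise_at_def)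
  then have "admissible n k ?new be" using adm decr' unfolding admissible_def by auto
  have nonneg: "0 \<le> ?new 0 - ?new (k - 1)"
    using strict_decr_gap[OF decr', of 0 "k - 1"] i by simp
  have "?new 0 - ?new (k - 1) < al 0 - al (k - 1) \<or> first_wide_gap k ?new < i"
  proof (cases "0 \<in> I")
    case False
    then have "?new 0 < al 0" unfolding al_eq[symmetric] by (simp add: raise_at_def)
    then show ?thesis using bot by linarith
  next
    case True
    have "finite I" using I(1) finite_subset by blast
    then have "\<not> {..i} \<subseteq> I" using I card_subset_eq[of I "{..i}"] by auto
    then obtain p where "p \<le> i" "p \<notin> I" by auto
    \<comment> \<open>the last element of I before p breaks the initial run\<close>
    with True obtain q where q: "q < p" "q \<in> I" "Suc q \<notin> I"
      using ex_least_nat_less[of "\<lambda>m. m \<notin> I" p] by auto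
    have "?new (Suc q) + 1 < ?new q"
      using run q \<open>p \<le> i\<close> unfolding al_eq[symmetric] by (simp add: raise_at_def)
    then have "first_wide_gap k ?new \<le> q"
      unfolding first_wide_gap_def using q \<open>p \<le> i\<close> i by (intro Least_le) simp
    then show ?thesis using q(1) \<open>p \<le> i\<close> by linarith
  qed
  moreover have "nat (?new 0 - ?new (k - 1)) \<le> nat (al 0 - al (k - 1))"
    using top bot by simp
  ultimately have "reduction_measure k ?new < reduction_measure k al"
    using nonneg gap by (auto simp: reduction_measure_def)
  with \<open>admissible n k ?new be\<close>
  show "admissible n k ?new be \<and> reduction_measure k ?new < reduction_measure k al" ..
qed

lemma hankel_span_vanishing: "(\<And>f. g f = 0) \<Longrightarrow> g \<in> hankel_span k S"
  using hankel_span.zero by (metis ext)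

lemma hankel_det_in_legal_span:
  assumes "int k \<le> int n - int c" "admissible n k al be" "be (k - 1) - be 0 \<le> int c - 1"
  shows "(\<lambda>f. hankel_det k f al be) \<in> hankel_span k (legal_params n c k)"
  using assms(2,3)
proof (induction "reduction_measure k al" arbitrary: al be rule: less_induct)
  case less
  show ?case
  proof (cases "al 0 - al (k - 1) \<le> int n - int c")
    case True
    with less.prems show ?thesis by (intro hankel_span.basis) (simp add: legal_params_def)
  next
    case False
    have decr: "strict_decr k al" using less.prems(1) unfolding admissible_def by blast
    define i where "i = first_wide_gap k al"
    have "int (k - 1) < al 0 - al (k - 1)" using False assms(1) by linarith
    note gap = first_wide_gap_spec[OF decr this, folded i_def]
    note i = gap(1,2) and run = gap(3)
    define low where "low = (\<lambda>m. al m - of_bool (m \<le> i))"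
    have al_eq: "raise_at low {..i} = al" by (auto simp: low_def raise_at_def)
    have "low (Suc i) < low i" using i(2) by (simp add: low_def)
    with decr have low_decr: "strict_decr k low"
      unfolding al_eq[symmetric] by (rule strict_decr_lower_top)
    let ?S = "{I. I \<subseteq> {0..<k} \<and> card I = Suc i}"
    have "finite ?S" by (rule finite_subset[of _ "Pow {0..<k}"]) auto
    have be_spread: "be (k - 1) - be 0 \<le> int c - 2"
      using less.prems(1) False unfolding admissible_def by linarith
    have cols: "(\<lambda>f. hankel_det k f low (raise_at be J)) \<in> hankel_span k (legal_params n c k)" for J
      using raise_cols_term_vanishes_or_smaller[OF less.prems(1) al_eq i(1) low_decr be_spread, of J]
    proof (elim disjE conjE)
      assume "\<forall>f :: int \<Rightarrow> int. hankel_det k f low (raise_at be J) = 0"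
      then show ?thesis by (intro hankel_span_vanishing) blast
    qed (rule less.hyps)
    have rows: "(\<lambda>f. hankel_det k f (raise_at low I) be) \<in> hankel_span k (legal_params n c k)"
      if "I \<in> ?S - {{..i}}" for I
    proof -
      have "I \<subseteq> {0..<k}" "card I = Suc i" "I \<noteq> {..i}" using that by auto
      from raise_rows_term_vanishes_or_smaller[OF less.prems(1) al_eq i(1) low_decr run
          i_def[symmetric] this]
      show ?thesis
      proof (elim disjE conjE)
        assume "\<forall>f :: int \<Rightarrow> int. hankel_det k f (raise_at low I) be = 0"
        then show ?thesis by (intro hankel_span_vanishing) blast
      qed (rule less.hyps, assumption+, rule less.prems(2))
    qed
    have block: "{..i} \<subseteq> {0..<k}" "card {..i} = Suc i" using i(1) by auto
    have "(\<lambda>f :: int \<Rightarrow> int. hankel_det k f al be) = (\<lambda>f.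
        (\<Sum>J\<in>?S. hankel_det k f low (raise_at be J)) -
        (\<Sum>I\<in>?S - {{..i}}. hankel_det k f (raise_at low I) be))"
      using hankel_det_raise_rows_eq_diff[OF block, of _ low be] unfolding al_eq by blast
    moreover have "\<dots> \<in> hankel_span k (legal_params n c k)"
      using \<open>finite ?S\<close> cols rows by (intro hankel_span.diff hankel_span_sum) auto
    ultimately show ?thesis by simp
  qed
qed

lemma hankel_det_eq_skew_schur:
  assumes decr: "strict_decr k al" and incr: "strict_incr k be"
    and low: "1 \<le> al (k - 1) + be 0" and "1 \<le> k"
  shows "\<exists>lam mu. is_partition_k k lam \<and> inner_ok k lam mu \<and>
           (\<forall>x. skew_schur n k lam mu x = hankel_det k (\<lambda>d. hsym n d x) al be)"
proof -
  \<comment> \<open>the shift t makes \<mu>_(k-1) = 0\<close>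
  define t where "t = be (k - 1) - int (k - 1)"
  define lam where "lam = map (\<lambda>i. nat (al i + int i + t)) [0..<k]"
  define mu where "mu = map (\<lambda>j. nat (int j - be j + t)) [0..<k]"
  note al_bot = strict_decr_bounds(1)[OF decr] and be_top = strict_incr_bounds(2)[OF incr]
  have lam_pos: "1 \<le> al i + int i + t" if "i < k" for i
    using al_bot[OF that] be_top[of 0] low \<open>1 \<le> k\<close> unfolding t_def by simp
  have lam_int: "int (lam ! i) = al i + int i + t" if "i < k" for i
    using that lam_pos[OF that] unfolding lam_def by simp
  have mu_int: "int (mu ! j) = int j - be j + t" if "j < k" for j
    using that be_top[OF that] unfolding mu_def t_def by simp
  have "is_partition_k k lam"
    unfolding is_partition_k_def sorted_wrt_iff_nth_less
  proof (intro conjI allI impI ballI)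
    show "lam ! j \<le> lam ! i" if "i < j" "j < length lam" for i j
      using that lam_int[of i] lam_int[of j] strict_decr_gap[OF decr, of i j] by (simp add: lam_def)
    show "0 < p" if "p \<in> set lam" for p
      using that lam_pos by (fastforce simp: lam_def)
  qed (simp add: lam_def)
  moreover have "inner_ok k lam mu"
    unfolding inner_ok_def sorted_wrt_iff_nth_less
  proof (intro conjI allI impI)
    show "mu ! j \<le> mu ! i" if "i < j" "j < length mu" for i j
      using that mu_int[of i] mu_int[of j] strict_incr_gap[OF incr, of i j] by (simp add: mu_def)
    show "mu ! i \<le> lam ! i" if "i < k" for i
      using that mu_int[of i] lam_int[of i] al_bot[of i] strict_incr_gap[OF incr, of 0 i] low by simp
    show "mu ! (k - 1) = 0" using \<open>1 \<le> k\<close> by (simp add: mu_def t_def)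
  qed (simp add: mu_def)
  moreover have "skew_schur n k lam mu x = hankel_det k (\<lambda>d. hsym n d x) al be" for x
    unfolding skew_schur_eq_hankel_det by (rule hankel_det_cong) (simp add: lam_int mu_int)
  ultimately show ?thesis by blast
qed

lemma hankel_det_eq_minor_A:
  assumes "(al, be) \<in> legal_params n c k" "c \<le> n"
  shows "\<exists>rs cs. length rs = k \<and> sorted_wrt (<) rs \<and> set rs \<subseteq> {1..n - c + 1} \<and>
           length cs = k \<and> sorted_wrt (<) cs \<and> set cs \<subseteq> {1..c} \<and>
           (\<forall>x. minor_A n c k rs cs x = hankel_det k (\<lambda>d. hsym n d x) al be)"
proof -
  have decr: "strict_decr k al" and incr: "strict_incr k be"
    and low: "1 \<le> al (k - 1) + be 0" and high: "al 0 + be (k - 1) \<le> int n"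
    and al_spread: "al 0 - al (k - 1) \<le> int n - int c"
    and be_spread: "be (k - 1) - be 0 \<le> int c - 1"
    using assms(1) unfolding legal_params_def admissible_def by auto
  have al_range: "al (k - 1) \<le> al a \<and> al a \<le> al 0" if "a < k" for a
    using strict_decr_bounds[OF decr that] that by simp
  have be_range: "be 0 \<le> be b \<and> be b \<le> be (k - 1)" if "b < k" for b
    using strict_incr_bounds[OF incr that] that by simp
  \<comment> \<open>the shift u moves the row indices into [0, n - c] and the column indices into [1, c]\<close>
  define u where "u = max (be (k - 1) - int c) (- al (k - 1))"
  define rs where "rs = map (\<lambda>a. nat (int n - int c + 1 - al a - u)) [0..<k]"
  define cs where "cs = map (\<lambda>b. nat (be b - u)) [0..<k]"
  have rs_range: "1 \<le> int n - int c + 1 - al a - u \<and> int n - int c + 1 - al a - u \<le> int n - int c + 1"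
    if "a < k" for a
    using al_range[OF that] high al_spread unfolding u_def by auto
  have cs_range: "1 \<le> be b - u \<and> be b - u \<le> int c" if "b < k" for b
    using be_range[OF that] low be_spread unfolding u_def by auto
  have rs_int: "int (rs ! a) = int n - int c + 1 - al a - u" if "a < k" for a
    using that rs_range[OF that] unfolding rs_def by simp
  have cs_int: "int (cs ! b) = be b - u" if "b < k" for b
    using that cs_range[OF that] unfolding cs_def by simp
  have "sorted_wrt (<) rs"
    unfolding rs_def using decr rs_range
    by (intro sorted_wrt_map_nat_upt) (fastforce simp: strict_decr_def strict_incr_def)+
  moreover have "sorted_wrt (<) cs"
    unfolding cs_def using incr cs_range
    by (intro sorted_wrt_map_nat_upt) (fastforce simp: strict_incr_def)+
  moreover have "set rs \<subseteq> {1..n - c + 1}"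
    using rs_range \<open>c \<le> n\<close> by (fastforce simp: rs_def)
  moreover have "set cs \<subseteq> {1..c}"
    using cs_range by (fastforce simp: cs_def)
  moreover have "minor_A n c k rs cs x = hankel_det k (\<lambda>d. hsym n d x) al be" for x
    unfolding minor_A_eq_hankel_det by (rule hankel_det_cong) (simp add: rs_int cs_int)
  ultimately show ?thesis by (intro exI[of _ rs] exI[of _ cs]) (simp add: rs_def cs_def)
qed

lemma legal_params_imp_legal:
  assumes "(al, be) \<in> legal_params n c k" "1 \<le> k" "c \<le> n"
  shows "\<exists>lam mu. legal n k c lam mu \<and>
           (\<forall>x. skew_schur n k lam mu x = hankel_det k (\<lambda>d. hsym n d x) al be)"
proof -
  have "strict_decr k al" "strict_incr k be" "1 \<le> al (k - 1) + be 0"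
    using assms(1) unfolding legal_params_def admissible_def by auto
  then obtain lam mu where "is_partition_k k lam" "inner_ok k lam mu"
    and "\<forall>x. skew_schur n k lam mu x = hankel_det k (\<lambda>d. hsym n d x) al be"
    using hankel_det_eq_skew_schur assms(2) by blast
  moreover obtain rs cs where "length rs = k" "sorted_wrt (<) rs" "set rs \<subseteq> {1..n - c + 1}"
    "length cs = k" "sorted_wrt (<) cs" "set cs \<subseteq> {1..c}"
    "\<forall>x. minor_A n c k rs cs x = hankel_det k (\<lambda>d. hsym n d x) al be"
    using hankel_det_eq_minor_A[OF assms(1,3)] by blast
  ultimately show ?thesis unfolding legal_def by (intro exI conjI) auto
qed

lemma legal_imp_legal_params:
  assumes "legal n k c lam mu" "1 \<le> k" "c \<le> n"
  obtains al be where "(al, be) \<in> legal_params n c k"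
    and "\<And>x. skew_schur n k lam mu x = hankel_det k (\<lambda>d. hsym n d x) al be"
proof -
  obtain rs cs where rs: "length rs = k" "sorted_wrt (<) rs" "set rs \<subseteq> {1..n - c + 1}"
    and cs: "length cs = k" "sorted_wrt (<) cs" "set cs \<subseteq> {1..c}"
    and eq: "\<forall>x. skew_schur n k lam mu x = minor_A n c k rs cs x"
    using assms(1) unfolding legal_def by blast
  have rs_range: "rs ! a \<in> {1..n - c + 1}" if "a < k" for a
    using rs(1,3) that by (auto dest: nth_mem)
  have cs_range: "cs ! b \<in> {1..c}" if "b < k" for b
    using cs(1,3) that by (auto dest: nth_mem)
  have "k - 1 < k" "0 < k" using \<open>1 \<le> k\<close> by auto
  note ends = rs_range[OF this(1)] rs_range[OF this(2)] cs_range[OF this(1)] cs_range[OF this(2)]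
  have "strict_decr k (\<lambda>a. int n - int c + 1 - int (rs ! a))"
    using rs(1,2) by (auto simp: strict_decr_def sorted_wrt_iff_nth_less)
  moreover have "strict_incr k (\<lambda>b. int (cs ! b))"
    using cs(1,2) by (auto simp: strict_incr_def sorted_wrt_iff_nth_less)
  ultimately have "(\<lambda>a. int n - int c + 1 - int (rs ! a), \<lambda>b. int (cs ! b)) \<in> legal_params n c k"
    using ends \<open>c \<le> n\<close> by (auto simp: legal_params_def admissible_def)
  then show ?thesis by (rule that) (simp add: eq minor_A_eq_hankel_det)
qed

theorem lemma3:
  fixes n k c :: nat and nu :: "nat list"
  assumes "0 < n" and "1 \<le> k" and "k \<le> c" and "2 * c \<le> n"
    and "legal n k k nu (replicate k 0)"
  shows "\<exists>L :: (int \<times> nat list \<times> nat list) list.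
           (\<forall>(a, lam, mu)\<in>set L. legal n k c lam mu) \<and>
           (\<forall>x. skew_schur n k nu (replicate k 0) x =
                (\<Sum>(a, lam, mu)\<leftarrow>L. a * skew_schur n k lam mu x))"
proof -
  have "k \<le> n" "c \<le> n" "int k \<le> int n - int c" using assms(3,4) by auto
  obtain al be where "(al, be) \<in> legal_params n k k"
    and nu: "\<And>x. skew_schur n k nu (replicate k 0) x = hankel_det k (\<lambda>d. hsym n d x) al be"
    using legal_imp_legal_params[OF assms(5,2) \<open>k \<le> n\<close>] by blast
  then have "admissible n k al be" "be (k - 1) - be 0 \<le> int c - 1"
    using assms(3) unfolding legal_params_def by auto
  with \<open>int k \<le> int n - int c\<close>
  have "(\<lambda>f. hankel_det k f al be) \<in> hankel_span k (legal_params n c k)"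
    by (rule hankel_det_in_legal_span)
  then obtain L where "\<forall>(a, lam, mu)\<in>set L. legal n k c lam mu"
    and "\<forall>x. hankel_det k (\<lambda>d. hsym n d x) al be = (\<Sum>(a, lam, mu)\<leftarrow>L. a * skew_schur n k lam mu x)"
    using hankel_span_skew_schur_combination[where P = "legal n k c"]
      legal_params_imp_legal[OF _ assms(2) \<open>c \<le> n\<close>] by blast
  with nu show ?thesis by auto
qed

end
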